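(* There exists a directed set $\mathcal A$, which is not a cardinal number, with $\operatorname{card}(\mathcal A)=\operatorname{cov}(\mathcal N)$, such that $\mathcal{AN}_{\mathcal A}$ is strongly $2^{\mathfrak c}$-algebrable in $\left(\mathbb R^{\mathbb R}\right)^{\mathcal A}$.
   Context: A directed set is a nonempty set $\mathcal A$ with a reflexive transitive relation $\le$ in which any two elements have an upper bound; $x_A\to x$ if for each neighbourhood $U$ of $x$ there is $A_0$ with $x_A\in U$ for $A\ge A_0$. $\left(\mathbb R^{\mathbb R}\right)^{\mathcal A}$ is the commutative real algebra of nets of functions $\mathbb R\to\mathbb R$ with indexwise operations. $\mathcal N$ denotes the Lebesgue null sets; $\operatorname{cov}(\mathcal N)$ is the least cardinality of a family of null sets covering $[0,1]$ (equivalently $\mathbb R$); $\mathfrak c=2^{\aleph_0}$. $\mathcal{AN}_{\mathcal A}$: nets of Lebesgue measurable functions $f_A:\mathbb R\to\mathbb R$ that converge pointwise a.e. to a non-Lebesgue-measurable function. A subset $S$ of a commutative algebra is strongly $\kappa$-algebrable if there is a set $X$ of $\kappa$ algebraically independent elements such that every nonzero element of the (non-unital) algebra generated by $X$ belongs to $S$. *)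

theory Defs
  imports "HOL-Analysis.Analysis"
begin

definition directed_set :: "'i set \<Rightarrow> ('i \<Rightarrow> 'i \<Rightarrow> bool) \<Rightarrow> bool" where
  "directed_set D le \<longleftrightarrow> D \<noteq> {} \<and> (\<forall>a\<in>D. le a a)
     \<and> (\<forall>a\<in>D. \<forall>b\<in>D. \<forall>c\<in>D. le a b \<longrightarrow> le b c \<longrightarrow> le a c)
     \<and> (\<forall>a\<in>D. \<forall>b\<in>D. \<exists>c\<in>D. le a c \<and> le b c)"

definition dir_rel :: "'i set \<Rightarrow> ('i \<Rightarrow> 'i \<Rightarrow> bool) \<Rightarrow> 'i rel" where
  "dir_rel D le = {(a, b). a \<in> D \<and> b \<in> D \<and> le a b}"

definition is_cardinal_number :: "'i set \<Rightarrow> ('i \<Rightarrow> 'i \<Rightarrow> bool) \<Rightarrow> bool" where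
  "is_cardinal_number D le \<longleftrightarrow> card_order_on D (dir_rel D le)"

definition card_eq_covN :: "'i set \<Rightarrow> bool" where
  "card_eq_covN D \<longleftrightarrow>
     (\<exists>F :: real set set. F \<subseteq> null_sets lebesgue \<and> \<Union>F = UNIV
        \<and> (card_of D, card_of F) \<in> ordIso)
   \<and> (\<forall>F :: real set set. F \<subseteq> null_sets lebesgue \<and> \<Union>F = UNIV
        \<longrightarrow> (card_of D, card_of F) \<in> ordLeq)"

definition net_tendsto :: "'i set \<Rightarrow> ('i \<Rightarrow> 'i \<Rightarrow> bool) \<Rightarrow> ('i \<Rightarrow> real) \<Rightarrow> real \<Rightarrow> bool" where
  "net_tendsto D le f x \<longleftrightarrow>
     (\<forall>U. open U \<and> x \<in> U \<longrightarrow> (\<exists>A0\<in>D. \<forall>A\<in>D. le A0 A \<longrightarrow> f A \<in> U))"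

text \<open>The algebra (R^R)^D: nets indexed by D (values outside D are fixed to 0).\<close>
definition nets :: "'i set \<Rightarrow> ('i \<Rightarrow> real \<Rightarrow> real) set" where
  "nets D = {f. \<forall>A. A \<notin> D \<longrightarrow> f A = (\<lambda>_. 0)}"

definition AN :: "'i set \<Rightarrow> ('i \<Rightarrow> 'i \<Rightarrow> bool) \<Rightarrow> ('i \<Rightarrow> real \<Rightarrow> real) set" where
  "AN D le = {f \<in> nets D. (\<forall>A\<in>D. f A \<in> borel_measurable lebesgue)
     \<and> (\<exists>g. g \<notin> borel_measurable lebesgue
            \<and> (AE x in lebesgue. net_tendsto D le (\<lambda>A. f A x) (g x)))}"

text \<open>A real polynomial in the variables 0..n-1 without constant term, given by a finite
  nonempty set M of exponent vectors (monomials, each nonconstant, supported in {..<n})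
  with nonzero coefficients c; hence a nonzero polynomial.\<close>
definition nonzero_poly_nc :: "nat \<Rightarrow> (nat \<Rightarrow> nat) set \<Rightarrow> ((nat \<Rightarrow> nat) \<Rightarrow> real) \<Rightarrow> bool" where
  "nonzero_poly_nc n M c \<longleftrightarrow> finite M \<and> M \<noteq> {}
     \<and> (\<forall>m\<in>M. (\<forall>i\<ge>n. m i = 0) \<and> m \<noteq> (\<lambda>_. 0) \<and> c m \<noteq> 0)"

definition poly_eval :: "nat \<Rightarrow> (nat \<Rightarrow> nat) set \<Rightarrow> ((nat \<Rightarrow> nat) \<Rightarrow> real) \<Rightarrow> (nat \<Rightarrow> real) \<Rightarrow> real" where
  "poly_eval n M c v = (\<Sum>m\<in>M. c m * (\<Prod>i<n. v i ^ m i))"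

definition net_poly_eval :: "nat \<Rightarrow> (nat \<Rightarrow> nat) set \<Rightarrow> ((nat \<Rightarrow> nat) \<Rightarrow> real)
     \<Rightarrow> (nat \<Rightarrow> 'i \<Rightarrow> real \<Rightarrow> real) \<Rightarrow> 'i \<Rightarrow> real \<Rightarrow> real" where
  "net_poly_eval n M c x = (\<lambda>A t. poly_eval n M c (\<lambda>i. x i A t))"

text \<open>S is strongly kappa-algebrable in (R^R)^D, where kappa = |K|: there is a set X of
  kappa elements such that every nonzero polynomial without constant term evaluated at
  distinct elements of X is nonzero (algebraic independence) and lies in S.\<close>
definition strongly_algebrable_nets :: "'i set \<Rightarrow> ('i \<Rightarrow> real \<Rightarrow> real) set \<Rightarrow> 'k set \<Rightarrow> bool" where
  "strongly_algebrable_nets D S K \<longleftrightarrow>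
     (\<exists>X. X \<subseteq> nets D \<and> (card_of X, card_of K) \<in> ordIso
        \<and> (\<forall>n M c x. nonzero_poly_nc n M c \<and> inj_on x {..<n} \<and> x ` {..<n} \<subseteq> X \<longrightarrow>
             net_poly_eval n M c x \<noteq> (\<lambda>_ _. 0) \<and> net_poly_eval n M c x \<in> S))"

end

theory Submission
  imports Defs "HOL-Computational_Algebra.Polynomial"
begin

text \<open>
  Take a null cover of \<open>\<real>\<close> of minimal size \<open>cov(\<N>)\<close>, close it under finite unions, and
  index its members by reals, ordered by inclusion of the null sets \<open>N A\<close>. A net equal to
  \<open>G\<close> on \<open>N A\<close> and \<open>0\<close> elsewhere consists of a.e.-zero, hence measurable, functions and
  converges everywhere to \<open>G\<close>; so it lies in \<open>\<A>\<N>\<close> as soon as \<open>G\<close> is not measurable.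

  By transfinite recursion there is a map \<open>\<eta>\<close> from \<open>\<real>\<close> onto a set of codes of
  continuum size that takes every value on every compact set of positive measure. Every
  \<open>S \<subseteq> \<real>\<close> reads each code as a natural number, and finitely many distinct sets can
  be given arbitrary values by a single code. A nonzero polynomial without constant term in
  the nets of finitely many sets is then the net of a function \<open>G\<close> which vanishes on one
  fibre of \<open>\<eta>\<close> and not on another (the polynomial has a nonzero value at some point of
  \<open>\<nat>\<^sup>n\<close>), so \<open>G\<close> is not measurable.
\<close>

unbundle cardinal_syntax

section \<open>Cardinal estimates\<close>

lemma card_of_lists_le_infinite:
  assumes "infinite A"
  shows "|lists A| \<le>o |A|"
proof -
  have "A \<noteq> {}"
    using assms by auto
  have len: "|{l \<in> lists A. length l = n}| \<le>o |A|" for n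
  proof (induction n)
    case 0
    have "{l \<in> lists A. length l = 0} = {[]}"
      by auto
    then show ?case
      using card_of_singl_ordLeq[OF \<open>A \<noteq> {}\<close>] by simp
  next
    case (Suc n)
    obtain a where "a \<in> A"
      using \<open>A \<noteq> {}\<close> by blast
    then have ne: "{l \<in> lists A. length l = n} \<noteq> {}"
      by (intro ex_in_conv[THEN iffD1] exI[of _ "replicate n a"]) auto
    have sub: "{l \<in> lists A. length l = Suc n}
        \<subseteq> (\<lambda>(x, l). x # l) ` (A \<times> {l \<in> lists A. length l = n})"
    proof
      fix l
      assume "l \<in> {l \<in> lists A. length l = Suc n}"
      then obtain x l' where "l = x # l'" "x \<in> A" "l' \<in> lists A" "length l' = n"
        by (auto simp: length_Suc_conv) (metis in_listsI)
      then show "l \<in> (\<lambda>(x, l). x # l) ` (A \<times> {l \<in> lists A. length l = n})"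
        by (intro image_eqI[of _ _ "(x, l')"]) auto
    qed
    have "|{l \<in> lists A. length l = Suc n}| \<le>o |A \<times> {l \<in> lists A. length l = n}|"
      using ordLeq_transitive[OF card_of_mono1[OF sub] card_of_image] .
    moreover have "|A \<times> {l \<in> lists A. length l = n}| =o |A|"
      by (rule conjunct1[OF card_of_Times_infinite[OF assms ne Suc.IH]])
    ultimately show ?case
      by (rule ordLeq_ordIso_trans)
  qed
  have "lists A = (\<Union>n. {l \<in> lists A. length l = n})"
    by auto
  moreover have "|\<Union>n. {l \<in> lists A. length l = n}| \<le>o |A|"
    using assms len infinite_iff_card_of_nat by (intro card_of_UNION_ordLeq_infinite) auto
  ultimately show ?thesis
    by metis
qed

definition rat_gaps :: "real set \<Rightarrow> (rat \<times> rat) set" where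
  "rat_gaps K = {(a, b). {of_rat a..of_rat b} \<inter> K = {}}"

lemma closed_real_mem_iff_rat_gaps:
  assumes "closed K"
  shows "x \<in> K \<longleftrightarrow> (\<forall>(a, b)\<in>rat_gaps K. x \<notin> {of_rat a..of_rat b})"
proof
  assume "x \<in> K"
  then show "\<forall>(a, b)\<in>rat_gaps K. x \<notin> {of_rat a..of_rat b}"
    by (auto simp: rat_gaps_def)
next
  assume avoid: "\<forall>(a, b)\<in>rat_gaps K. x \<notin> {of_rat a..of_rat b}"
  show "x \<in> K"
  proof (rule ccontr)
    assume "x \<notin> K"
    then obtain e where "e > 0" and e: "ball x e \<subseteq> - K"
      using assms open_contains_ball[of "- K"] by (auto simp: closed_def)
    obtain a :: rat where a: "x - e < of_rat a" "of_rat a < x"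
      using of_rat_dense[of "x - e" x] \<open>e > 0\<close> by auto
    obtain b :: rat where b: "x < of_rat b" "of_rat b < x + e"
      using of_rat_dense[of x "x + e"] \<open>e > 0\<close> by auto
    have "{of_rat a..of_rat b} \<subseteq> ball x e"
      using a b by (auto simp: dist_real_def)
    then have "(a, b) \<in> rat_gaps K"
      using e by (auto simp: rat_gaps_def)
    moreover have "x \<in> {of_rat a..of_rat b}"
      using a b by simp
    ultimately show False
      using avoid by blast
  qed
qed

lemma card_of_closed_real_sets_le: "|{K :: real set. closed K}| \<le>o |UNIV :: real set|"
proof -
  have "inj_on rat_gaps {K. closed K}"
  proof (rule inj_onI)
    fix K K' :: "real set"
    assume "K \<in> {K. closed K}" "K' \<in> {K. closed K}" "rat_gaps K = rat_gaps K'"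
    then show "K = K'"
      by (intro set_eqI) (simp add: closed_real_mem_iff_rat_gaps)
  qed
  then have "inj_on (\<lambda>K. to_nat ` rat_gaps K) {K. closed K}"
    by (auto simp: inj_on_def inj_image_eq_iff)
  then have "|{K :: real set. closed K}| \<le>o |UNIV :: nat set set|"
    unfolding card_of_ordLeq[symmetric] by blast
  moreover have "|UNIV :: nat set set| =o |UNIV :: real set|"
    using nat_sets_eqpoll_reals by (simp add: eqpoll_iff_card_of_ordIso)
  ultimately show ?thesis
    by (rule ordLeq_ordIso_trans)
qed

lemma card_of_real_lists_times_countable_le:
  "|UNIV :: (real list \<times> 'c :: countable) set| \<le>o |UNIV :: real set|"
proof -
  have inf: "infinite (UNIV :: real set)"
    by (rule infinite_UNIV_char_0)
  have "|UNIV :: 'c set| \<le>o |UNIV :: nat set|"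
    unfolding card_of_ordLeq[symmetric] using inj_to_nat by blast
  then have "|UNIV :: 'c set| \<le>o |UNIV :: real set|"
    using ordLeq_transitive infinite_iff_card_of_nat[THEN iffD1, OF inf] by blast
  moreover have "|lists (UNIV :: real set)| \<le>o |UNIV :: real set|"
    using card_of_lists_le_infinite[OF inf] .
  ultimately have "|lists (UNIV :: real set) \<times> (UNIV :: 'c set)| \<le>o |UNIV :: real set|"
    using inf by (intro card_of_Times_ordLeq_infinite_Field) (simp_all add: Field_card_of card_of_card_order_on)
  then show ?thesis
    by simp
qed

text \<open>Transfinite recursion along a well-order of \<open>I\<close> of type \<open>|I|\<close>: at stage \<open>i\<close> fewer
  than \<open>|I| \<le> |A i|\<close> points have been used, so a fresh point of \<open>A i\<close> is available.\<close>
lemma exists_injective_transversal: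
  fixes I :: "'a set" and A :: "'a \<Rightarrow> 'b set"
  assumes "\<And>i. i \<in> I \<Longrightarrow> |I| \<le>o |A i|"
  shows "\<exists>p. inj_on p I \<and> (\<forall>i\<in>I. p i \<in> A i)"
proof -
  let ?r = "|I|"
  have wo: "wo_rel ?r"
    using card_of_Well_order unfolding wo_rel_def .
  define H where "H = (\<lambda>(p :: 'a \<Rightarrow> 'b) i. SOME x. x \<in> A i \<and> x \<notin> p ` underS ?r i)"
  define p where "p = wo_rel.worec ?r H"
  have "wo_rel.adm_wo ?r H"
    unfolding wo_rel.adm_wo_def[OF wo] H_def
    by (auto intro!: arg_cong[where f = Eps] simp: fun_eq_iff image_def)
  then have p_rec: "p = H p"
    unfolding p_def by (rule wo_rel.worec_fixpoint[OF wo])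
  have fresh: "p i \<in> A i \<and> p i \<notin> p ` underS ?r i" if "i \<in> I" for i
  proof -
    have "|p ` underS ?r i| \<le>o |underS ?r i|"
      by (rule card_of_image)
    moreover have "|underS ?r i| <o ?r"
      using card_of_underS[OF card_of_Card_order] that by (simp add: Field_card_of)
    ultimately have "|p ` underS ?r i| <o |A i|"
      using ordLess_ordLeq_trans ordLeq_ordLess_trans assms that by blast
    then have "\<not> A i \<subseteq> p ` underS ?r i"
      using card_of_mono1 not_ordLess_ordLeq by metis
    then have "\<exists>x. x \<in> A i \<and> x \<notin> p ` underS ?r i"
      by blast
    then have "H p i \<in> A i \<and> H p i \<notin> p ` underS ?r i"
      unfolding H_def by (rule someI_ex)
    then show ?thesis
      using p_rec by metis
  qed
  have "inj_on p I"
  proof (rule inj_onI, rule ccontr)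
    fix i j
    assume ij: "i \<in> I" "j \<in> I" "p i = p j" "i \<noteq> j"
    then have "i \<in> underS ?r j \<or> j \<in> underS ?r i"
      using wo_rel.TOTALS[OF wo] by (auto simp: Field_card_of underS_def)
    then show False
      using fresh[OF ij(1)] fresh[OF ij(2)] ij(3) by (metis imageI)
  qed
  then show ?thesis
    using fresh by blast
qed

lemma measure_Int_atMost_lipschitz:
  fixes K :: "real set"
  assumes "compact K" "x \<le> y"
  shows "measure lebesgue (K \<inter> {..x}) \<le> measure lebesgue (K \<inter> {..y})"
    and "measure lebesgue (K \<inter> {..y}) - measure lebesgue (K \<inter> {..x}) \<le> y - x"
proof -
  have measurable: "K \<inter> {..z} \<in> lmeasurable" for z
    using assms(1) by (intro lmeasurable_compact) (simp add: compact_Int_closed)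
  have sub: "K \<inter> {..x} \<subseteq> K \<inter> {..y}"
    using assms(2) by auto
  then show "measure lebesgue (K \<inter> {..x}) \<le> measure lebesgue (K \<inter> {..y})"
    using measurable[of x] measurable[of y] by (intro measure_mono_fmeasurable) auto
  have "measure lebesgue (K \<inter> {..y}) - measure lebesgue (K \<inter> {..x})
      = measure lebesgue (K \<inter> {..y} - K \<inter> {..x})"
    using measurable[of x] measurable[of y] sub by (subst measure_Diff) (auto simp: fmeasurable_def)
  also have "\<dots> \<le> measure lebesgue {x..y}"
    using measurable[of x] measurable[of y] by (intro measure_mono_fmeasurable) auto
  finally show "measure lebesgue (K \<inter> {..y}) - measure lebesgue (K \<inter> {..x}) \<le> y - x"
    using assms(2) by simp
qed

lemma continuous_on_measure_Int_atMost:
  fixes K :: "real set"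
  assumes "compact K"
  shows "continuous_on UNIV (\<lambda>x. measure lebesgue (K \<inter> {..x}))"
proof -
  have "\<bar>measure lebesgue (K \<inter> {..y}) - measure lebesgue (K \<inter> {..x})\<bar> \<le> \<bar>y - x\<bar>" for x y
    using measure_Int_atMost_lipschitz[OF assms, of x y] measure_Int_atMost_lipschitz[OF assms, of y x]
    by (cases "x \<le> y") linarith+
  then show ?thesis
    unfolding continuous_on_iff by (metis dist_real_def le_less_trans)
qed

text \<open>Each value \<open>v\<close> is attained at some \<open>x\<close> by the intermediate value theorem, and then at
  the largest point of \<open>K \<inter> {..x}\<close>.\<close>
lemma measure_Int_atMost_image:
  fixes K :: "real set"
  assumes K: "compact K" and pos: "0 < measure lebesgue K"
  shows "{0<..measure lebesgue K} \<subseteq> (\<lambda>x. measure lebesgue (K \<inter> {..x})) ` K"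
proof
  define F where "F x = measure lebesgue (K \<inter> {..x})" for x
  fix v
  assume v: "v \<in> {0<..measure lebesgue K}"
  have "K \<noteq> {}"
    using pos by auto
  have bdd: "bdd_below K" "bdd_above K"
    using K by (auto simp: compact_imp_bounded bounded_imp_bdd_below bounded_imp_bdd_above)
  have "Inf K \<in> K"
    using closed_contains_Inf \<open>K \<noteq> {}\<close> K bdd by (auto simp: compact_imp_closed)
  have bounds: "Inf K \<le> k" "k \<le> Sup K" if "k \<in> K" for k
    using that bdd by (auto intro: cInf_lower cSup_upper)
  then have "K \<inter> {..Inf K - 1} = {}" "K \<inter> {..Sup K} = K"
    by force+
  then have "F (Inf K - 1) = 0" "F (Sup K) = measure lebesgue K"
    by (simp_all add: F_def)
  then obtain x where x: "F x = v"
    using IVT'[of F "Inf K - 1" v "Sup K"] v \<open>Inf K \<in> K\<close> bounds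
      continuous_on_subset[OF continuous_on_measure_Int_atMost[OF K]]
    unfolding F_def by force
  then have "K \<inter> {..x} \<noteq> {}"
    using v unfolding F_def by auto
  have compact_part: "compact (K \<inter> {..x})"
    using K by (simp add: compact_Int_closed)
  define s where "s = Sup (K \<inter> {..x})"
  have s: "s \<in> K \<inter> {..x}"
    unfolding s_def using closed_contains_Sup[OF \<open>K \<inter> {..x} \<noteq> {}\<close>] compact_part
    by (auto simp: compact_imp_closed compact_imp_bounded bounded_imp_bdd_above)
  have "k \<le> s" if "k \<in> K \<inter> {..x}" for k
    unfolding s_def using that compact_part
    by (auto intro!: cSup_upper simp: compact_imp_bounded bounded_imp_bdd_above)
  then have "K \<inter> {..x} = K \<inter> {..s}"
    using s by auto
  then show "v \<in> (\<lambda>x. measure lebesgue (K \<inter> {..x})) ` K"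
    using x s unfolding F_def by auto
qed

lemma card_of_UNIV_real_le_compact:
  fixes K :: "real set"
  assumes "compact K" and pos: "0 < measure lebesgue K"
  shows "|UNIV :: real set| \<le>o |K|"
proof -
  have "{0<..measure lebesgue K} \<approx> (UNIV :: real set)"
    by (rule eqpoll_real_subset[OF pos]) auto
  then have "|UNIV :: real set| =o |{0<..measure lebesgue K}|"
    by (simp add: eqpoll_iff_card_of_ordIso ordIso_symmetric)
  moreover have "|{0<..measure lebesgue K}| \<le>o |K|"
    using ordLeq_transitive[OF card_of_mono1[OF measure_Int_atMost_image[OF assms]] card_of_image] .
  ultimately show ?thesis
    by (rule ordIso_ordLeq_trans)
qed

section \<open>Bernstein maps\<close>

text \<open>Each fibre of such a map is a Bernstein set for Lebesgue measure: it and its complement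
  meet every compact set of positive measure.\<close>
definition bernstein_map :: "(real \<Rightarrow> 'y) \<Rightarrow> bool" where
  "bernstein_map \<eta> \<longleftrightarrow> (\<forall>y K. compact K \<and> 0 < measure lebesgue K \<longrightarrow> (\<exists>t\<in>K. \<eta> t = y))"

lemma bernstein_map_exists:
  assumes "|UNIV :: 'y set| \<le>o |UNIV :: real set|"
  shows "\<exists>\<eta> :: real \<Rightarrow> 'y. bernstein_map \<eta>"
proof -
  define I where "I = {K :: real set. compact K \<and> 0 < measure lebesgue K} \<times> (UNIV :: 'y set)"
  have "|I| \<le>o |{K :: real set. closed K} \<times> (UNIV :: 'y set)|"
    unfolding I_def by (intro card_of_mono1) (auto simp: compact_imp_closed)
  moreover have "|{K :: real set. closed K} \<times> (UNIV :: 'y set)| \<le>o |UNIV :: real set|"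
    using card_of_closed_real_sets_le assms
    by (intro card_of_Times_ordLeq_infinite_Field)
      (simp_all add: Field_card_of card_of_card_order_on infinite_UNIV_char_0)
  ultimately have I_le: "|I| \<le>o |UNIV :: real set|"
    by (rule ordLeq_transitive)
  have "|I| \<le>o |fst i|" if "i \<in> I" for i
  proof -
    have "compact (fst i)" "0 < measure lebesgue (fst i)"
      using that by (auto simp: I_def)
    then show ?thesis
      by (rule ordLeq_transitive[OF I_le card_of_UNIV_real_le_compact])
  qed
  then obtain p where p: "inj_on p I" "\<forall>i\<in>I. p i \<in> fst i"
    using exists_injective_transversal[of I fst] by blast
  have "bernstein_map (snd \<circ> inv_into I p)"
    unfolding bernstein_map_def
  proof (intro allI impI)
    fix y :: 'y and K :: "real set"
    assume "compact K \<and> 0 < measure lebesgue K"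
    then have "(K, y) \<in> I"
      by (simp add: I_def)
    then show "\<exists>t\<in>K. (snd \<circ> inv_into I p) t = y"
      using p by (intro bexI[of _ "p (K, y)"]) auto
  qed
  then show ?thesis
    by blast
qed

lemma bernstein_map_surj:
  assumes "bernstein_map \<eta>"
  shows "surj \<eta>"
proof -
  have "compact {0..1::real}" "0 < measure lebesgue {0..1::real}"
    by (simp_all add: measure_def)
  then have "\<exists>t\<in>{0..1}. \<eta> t = y" for y
    using assms unfolding bernstein_map_def by blast
  then show ?thesis
    by (metis surj_def)
qed

lemma compact_subset_of_positive_measure:
  fixes S :: "'a :: euclidean_space set"
  assumes "S \<in> sets lebesgue" "bounded S" "0 < measure lebesgue S"
  obtains K where "compact K" "K \<subseteq> S" "0 < measure lebesgue K"
proof -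
  obtain T where T: "closed T" "T \<subseteq> S" "S - T \<in> lmeasurable"
      "emeasure lebesgue (S - T) < ennreal (measure lebesgue S)"
    using sets_lebesgue_inner_closed[OF assms(1,3)] by blast
  have "compact T"
    using T(1,2) assms(2) by (meson bounded_subset compact_eq_bounded_closed)
  then have "T \<in> lmeasurable"
    by (rule lmeasurable_compact)
  have "S \<in> lmeasurable"
    using assms(1,2) by (rule bounded_set_imp_lmeasurable[rotated])
  have "measure lebesgue (S - T) < measure lebesgue S"
    using T(3,4) by (simp add: emeasure_eq_measure2 ennreal_less_iff)
  moreover have "measure lebesgue (S - T) = measure lebesgue S - measure lebesgue T"
    using \<open>S \<in> lmeasurable\<close> \<open>T \<in> lmeasurable\<close> T(2)
    by (intro measure_Diff) (auto simp: fmeasurable_def)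
  ultimately show thesis
    using that \<open>compact T\<close> T(2) by simp
qed

lemma not_lebesgue_measurable_if_splits_positive_compacts:
  fixes E :: "real set"
  assumes "\<And>K. compact K \<Longrightarrow> 0 < measure lebesgue K \<Longrightarrow> K \<inter> E \<noteq> {} \<and> K - E \<noteq> {}"
  shows "E \<notin> sets lebesgue"
proof
  assume E: "E \<in> sets lebesgue"
  have parts: "{0..1} \<inter> E \<in> sets lebesgue" "bounded ({0..1} \<inter> E)"
    "{0..1} - E \<in> sets lebesgue" "bounded ({0..1} - E)"
    using E by (auto intro: bounded_subset[OF bounded_closed_interval])
  have "{0..1} - ({0..1} \<inter> E) = {0..1} - E"
    by blast
  then have "measure lebesgue ({0..1} - E) = measure lebesgue {0..1::real} - measure lebesgue ({0..1} \<inter> E)"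
    using measure_Diff[of lebesgue "{0..1::real}" "{0..1} \<inter> E"] parts by simp
  moreover have "measure lebesgue {0..1::real} = 1"
    by (simp add: measure_def)
  ultimately consider "0 < measure lebesgue ({0..1} \<inter> E)" | "0 < measure lebesgue ({0..1} - E)"
    by linarith
  then show False
  proof cases
    case 1
    with parts(1,2) obtain K where "compact K" "K \<subseteq> {0..1} \<inter> E" "0 < measure lebesgue K"
      by (rule compact_subset_of_positive_measure)
    then show False
      using assms by blast
  next
    case 2
    with parts(3,4) obtain K where "compact K" "K \<subseteq> {0..1} - E" "0 < measure lebesgue K"
      by (rule compact_subset_of_positive_measure)
    then show False
      using assms by blast
  qed
qed

lemma bernstein_map_nonmeasurable:
  fixes G :: "real \<Rightarrow> 'b :: {t2_space, zero}"
  assumes "bernstein_map \<eta>" "\<And>t. \<eta> t = y0 \<Longrightarrow> G t \<noteq> 0" "\<And>t. \<eta> t = y1 \<Longrightarrow> G t = 0"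
  shows "G \<notin> borel_measurable lebesgue"
proof
  assume "G \<in> borel_measurable lebesgue"
  then have "G -` {0} \<in> sets lebesgue"
    using borel_measurable_vimage[of G lebesgue 0] by simp
  moreover have "K \<inter> G -` {0} \<noteq> {} \<and> K - G -` {0} \<noteq> {}"
    if "compact K" "0 < measure lebesgue K" for K
    using assms that unfolding bernstein_map_def by (metis DiffI IntI empty_iff singletonD vimage_singleton_eq)
  ultimately show False
    using not_lebesgue_measurable_if_splits_positive_compacts by blast
qed

section \<open>A directed set of null sets\<close>

definition null_cover :: "real set set \<Rightarrow> bool" where
  "null_cover F \<longleftrightarrow> F \<subseteq> null_sets lebesgue \<and> \<Union>F = UNIV"

lemma null_cover_infinite:
  assumes "null_cover F"
  shows "infinite F"
proof
  assume "finite F"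
  then have "\<Union>F \<in> null_sets lebesgue"
    using assms unfolding null_cover_def by (intro null_sets.finite_Union) auto
  then have "(UNIV :: real set) \<in> null_sets lebesgue"
    using assms by (simp add: null_cover_def)
  then have "{0..1::real} \<in> null_sets lebesgue"
    by (rule null_sets_subset) simp_all
  then show False
    by (simp add: null_sets_def)
qed

lemma exists_minimal_null_cover:
  obtains F where "null_cover F" "\<And>G. null_cover G \<Longrightarrow> |F| \<le>o |G|"
proof -
  have "null_cover (range (\<lambda>x. {x}))"
    by (auto simp: null_cover_def)
  then obtain r where "r \<in> card_of ` Collect null_cover" "\<forall>r' \<in> card_of ` Collect null_cover. r \<le>o r'"
    using exists_minim_Well_order[of "card_of ` Collect null_cover"] card_of_Well_order by blast
  then show thesis
    using that by blast
qed

definition finite_unions :: "'a set set \<Rightarrow> 'a set set" where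
  "finite_unions F = (\<lambda>l. \<Union>(set l)) ` lists F"

lemma finite_unions_superset: "F \<subseteq> finite_unions F"
  unfolding finite_unions_def by (auto intro!: image_eqI[where x = "[_]"])

lemma Un_in_finite_unions:
  assumes "X \<in> finite_unions F" "Y \<in> finite_unions F"
  shows "X \<union> Y \<in> finite_unions F"
proof -
  obtain l1 l2 where "l1 \<in> lists F" "X = \<Union>(set l1)" "l2 \<in> lists F" "Y = \<Union>(set l2)"
    using assms by (auto simp: finite_unions_def)
  then show ?thesis
    unfolding finite_unions_def by (auto intro!: image_eqI[where x = "l1 @ l2"])
qed

lemma finite_unions_null_sets:
  assumes "F \<subseteq> null_sets M"
  shows "finite_unions F \<subseteq> null_sets M"
  using assms unfolding finite_unions_def by (auto intro!: null_sets.finite_Union)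

lemma card_of_finite_unions_le:
  assumes "infinite F"
  shows "|finite_unions F| \<le>o |F|"
  unfolding finite_unions_def
  using ordLeq_transitive[OF card_of_image card_of_lists_le_infinite[OF assms]] .

text \<open>The members \<open>{0}\<close> and \<open>{1}\<close> are incomparable under inclusion; they keep the
  index order from being linear.\<close>
lemma exists_minimal_union_closed_null_cover:
  obtains G where "null_cover G" "{0} \<in> G" "{1} \<in> G" "\<forall>X\<in>G. \<forall>Y\<in>G. X \<union> Y \<in> G"
    "\<And>F. null_cover F \<Longrightarrow> |G| \<le>o |F|"
proof -
  obtain F0 where F0: "null_cover F0" "\<And>F. null_cover F \<Longrightarrow> |F0| \<le>o |F|"
    using exists_minimal_null_cover by blast
  define F1 where "F1 = insert {0} (insert {1} F0)"
  have "infinite F0"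
    using F0(1) by (rule null_cover_infinite)
  then have "F1 \<approx> F0"
    unfolding F1_def by (metis eqpoll_trans finite_insert infinite_insert_eqpoll)
  then have "|F1| \<le>o |F0|"
    by (simp add: eqpoll_iff_card_of_ordIso ordIso_iff_ordLeq)
  moreover have "infinite F1"
    using \<open>infinite F0\<close> by (simp add: F1_def)
  ultimately have card_le: "|finite_unions F1| \<le>o |F0|"
    using ordLeq_transitive card_of_finite_unions_le by blast
  have "F1 \<subseteq> null_sets lebesgue"
    using F0(1) by (auto simp: F1_def null_cover_def)
  then have "null_cover (finite_unions F1)"
    using F0(1) finite_unions_superset[of F1] finite_unions_null_sets[of F1]
    unfolding null_cover_def F1_def by blast
  moreover have "{0} \<in> F1" "{1} \<in> F1"
    by (simp_all add: F1_def)
  then have "{0} \<in> finite_unions F1" "{1} \<in> finite_unions F1"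
    using finite_unions_superset[of F1] by blast+
  ultimately show thesis
    using that Un_in_finite_unions card_le F0(2) ordLeq_transitive by blast
qed

lemma directed_set_union_closed_index:
  assumes "inj_on f G" "G \<noteq> {}" "\<forall>X\<in>G. \<forall>Y\<in>G. X \<union> Y \<in> G"
  shows "directed_set (f ` G) (\<lambda>a b. inv_into G f a \<subseteq> inv_into G f b)"
  unfolding directed_set_def
proof (intro conjI ballI)
  fix a b
  assume "a \<in> f ` G" "b \<in> f ` G"
  then obtain X Y where "X \<in> G" "Y \<in> G" "a = f X" "b = f Y"
    by blast
  then show "\<exists>c\<in>f ` G. inv_into G f a \<subseteq> inv_into G f c \<and> inv_into G f b \<subseteq> inv_into G f c"
    using assms by (intro bexI[of _ "f (X \<union> Y)"]) auto
qed (use assms in auto)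

lemma not_is_cardinal_number_if_incomparable:
  assumes "a \<in> D" "b \<in> D" "a \<noteq> b" "\<not> le a b" "\<not> le b a"
  shows "\<not> is_cardinal_number D le"
proof
  assume "is_cardinal_number D le"
  then have "total_on D (dir_rel D le)"
    unfolding is_cardinal_number_def card_order_on_def well_order_on_def linear_order_on_def
    by blast
  then show False
    using assms unfolding total_on_def dir_rel_def by blast
qed

text \<open>Nets supported on the sets \<open>N A\<close> vanish a.e. at every index, yet converge everywhere.\<close>
locale null_exhaustion =
  fixes D :: "'i set" and le :: "'i \<Rightarrow> 'i \<Rightarrow> bool" and N :: "'i \<Rightarrow> real set"
  assumes null_index: "a \<in> D \<Longrightarrow> N a \<in> null_sets lebesgue"
    and exhausting: "\<exists>a\<in>D. t \<in> N a"
    and mono_index: "a \<in> D \<Longrightarrow> b \<in> D \<Longrightarrow> le a b \<Longrightarrow> N a \<subseteq> N b"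

lemma card_eq_covN_if_minimal_null_cover:
  assumes "null_cover G" "\<And>F. null_cover F \<Longrightarrow> |G| \<le>o |F|" "|D| =o |G|"
  shows "card_eq_covN D"
  unfolding card_eq_covN_def
proof (intro conjI allI impI)
  show "\<exists>F :: real set set. F \<subseteq> null_sets lebesgue \<and> \<Union>F = UNIV \<and> |D| =o |F|"
    using assms(1,3) by (auto simp: null_cover_def)
  fix F :: "real set set"
  assume "F \<subseteq> null_sets lebesgue \<and> \<Union>F = UNIV"
  then show "|D| \<le>o |F|"
    using ordIso_ordLeq_trans[OF assms(3) assms(2)] by (simp add: null_cover_def)
qed

lemma null_exhaustion_inv_into:
  assumes "inj_on f G" "null_cover G"
  shows "null_exhaustion (f ` G) (\<lambda>a b. inv_into G f a \<subseteq> inv_into G f b) (inv_into G f)"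
proof
  fix a
  assume "a \<in> f ` G"
  then show "inv_into G f a \<in> null_sets lebesgue"
    using assms by (auto simp: null_cover_def)
next
  fix t :: real
  have "t \<in> \<Union>G"
    using assms(2) by (simp add: null_cover_def)
  then obtain X where "X \<in> G" "t \<in> X"
    by blast
  then show "\<exists>a\<in>f ` G. t \<in> inv_into G f a"
    using assms(1) by (intro bexI[of _ "f X"]) auto
qed

lemma exists_directed_null_exhaustion:
  "\<exists>(D :: real set) le N. directed_set D le \<and> \<not> is_cardinal_number D le \<and> card_eq_covN D
     \<and> null_exhaustion D le N"
proof -
  obtain G where G: "null_cover G" "{0} \<in> G" "{1} \<in> G" "\<forall>X\<in>G. \<forall>Y\<in>G. X \<union> Y \<in> G"
    and G_min: "\<And>F. null_cover F \<Longrightarrow> |G| \<le>o |F|"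
    using exists_minimal_union_closed_null_cover by blast
  have "|G| \<le>o |range (\<lambda>x :: real. {x})|"
    by (rule G_min) (auto simp: null_cover_def)
  then have "|G| \<le>o |UNIV :: real set|"
    using ordLeq_transitive card_of_image by blast
  then obtain f :: "real set \<Rightarrow> real" where f: "inj_on f G"
    unfolding card_of_ordLeq[symmetric] by blast
  define le where "le a b \<longleftrightarrow> inv_into G f a \<subseteq> inv_into G f b" for a b
  have "directed_set (f ` G) le"
    unfolding le_def using directed_set_union_closed_index f G by blast
  moreover have "\<not> is_cardinal_number (f ` G) le"
    using f G(2,3) by (intro not_is_cardinal_number_if_incomparable[of "f {0}" _ "f {1}"])
      (auto simp: le_def dest: inj_onD)
  moreover have "|f ` G| =o |G|"
    using f card_of_ordIso[of G "f ` G"] ordIso_symmetric by (auto simp: bij_betw_def)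
  then have "card_eq_covN (f ` G)"
    using G(1) G_min by (intro card_eq_covN_if_minimal_null_cover)
  moreover have "null_exhaustion (f ` G) le (inv_into G f)"
    unfolding le_def using f G(1) by (rule null_exhaustion_inv_into)
  ultimately show ?thesis
    by blast
qed

section \<open>Polynomials without constant term\<close>

lemma base_expansion_inj:
  fixes B :: nat
  assumes "B > 0" "\<forall>i<n. m i < B" "\<forall>i<n. m' i < B"
    and "(\<Sum>i<n. m i * B ^ i) = (\<Sum>i<n. m' i * B ^ i)"
  shows "\<forall>i<n. m i = m' i"
  using assms
proof (induction n arbitrary: m m')
  case 0
  then show ?case by simp
next
  case (Suc n)
  have shift: "(\<Sum>i<Suc n. f i * B ^ i) = f 0 + B * (\<Sum>i<n. f (Suc i) * B ^ i)" for f :: "nat \<Rightarrow> nat"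
    unfolding sum.lessThan_Suc_shift
    by (simp add: sum_distrib_left mult.assoc mult.left_commute del: sum.lessThan_Suc)
  have eq: "m 0 + B * (\<Sum>i<n. m (Suc i) * B ^ i) = m' 0 + B * (\<Sum>i<n. m' (Suc i) * B ^ i)"
    using Suc.prems(4) shift[of m] shift[of m'] by simp
  have "m 0 < B" "m' 0 < B"
    using Suc.prems by auto
  then have head: "m 0 = m' 0"
    using arg_cong[OF eq, of "\<lambda>x. x mod B"] by simp
  then have "(\<Sum>i<n. m (Suc i) * B ^ i) = (\<Sum>i<n. m' (Suc i) * B ^ i)"
    using eq \<open>B > 0\<close> by simp
  then have "\<forall>i<n. m (Suc i) = m' (Suc i)"
    using Suc.IH[of "m \<circ> Suc" "m' \<circ> Suc"] Suc.prems by auto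
  then show ?case
    using head by (auto simp: less_Suc_eq_0_disj)
qed

lemma exists_base_encoding_inj_on:
  fixes M :: "(nat \<Rightarrow> nat) set"
  assumes "finite M" "\<forall>m\<in>M. \<forall>i\<ge>n. m i = (0::nat)"
  shows "\<exists>B. inj_on (\<lambda>m. \<Sum>i<n. m i * B ^ i) M"
proof -
  define B where "B = Suc (Max ((\<lambda>(m, i). m i) ` (M \<times> {..<n})))"
  have digit: "m i < B" if "m \<in> M" "i < n" for m i
  proof -
    have "m i \<le> Max ((\<lambda>(m, i). m i) ` (M \<times> {..<n}))"
      using that assms(1) by (intro Max_ge) force+
    then show ?thesis
      by (simp add: B_def)
  qed
  have "m = m'"
    if "m \<in> M" "m' \<in> M" "(\<Sum>i<n. m i * B ^ i) = (\<Sum>i<n. m' i * B ^ i)" for m m'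
  proof
    fix i
    show "m i = m' i"
    proof (cases "i < n")
      case True
      then show ?thesis
        using base_expansion_inj[of B n m m'] that digit by (auto simp: B_def)
    next
      case False
      then show ?thesis
        using assms(2) that(1,2) by (metis not_less)
    qed
  qed
  then show ?thesis
    by (auto intro: inj_onI)
qed

text \<open>Kronecker substitution \<open>v\<^sub>i = x ^ B ^ i\<close> turns the polynomial into a nonzero univariate
  one, which has only finitely many roots.\<close>
lemma nonzero_poly_nc_nonvanishing:
  assumes "nonzero_poly_nc n M c"
  shows "\<exists>k :: nat \<Rightarrow> nat. poly_eval n M c (\<lambda>i. real (k i)) \<noteq> 0"
proof -
  have fin: "finite M" and "M \<noteq> {}" and cnz: "\<And>m. m \<in> M \<Longrightarrow> c m \<noteq> 0"
    using assms unfolding nonzero_poly_nc_def by auto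
  then obtain m0 where m0: "m0 \<in> M"
    by blast
  obtain B where enc: "inj_on (\<lambda>m. \<Sum>i<n. m i * B ^ i) M"
    using exists_base_encoding_inj_on[OF fin] assms unfolding nonzero_poly_nc_def by blast
  define \<kappa> where "\<kappa> m = (\<Sum>i<n. m i * B ^ i)" for m :: "nat \<Rightarrow> nat"
  define p :: "real poly" where "p = (\<Sum>m\<in>M. monom (c m) (\<kappa> m))"
  have "coeff p (\<kappa> m0) = (\<Sum>m\<in>M. if \<kappa> m = \<kappa> m0 then c m else 0)"
    by (simp add: p_def coeff_sum coeff_monom)
  also have "\<dots> = c m0"
    using fin m0 enc by (subst sum.mono_neutral_cong_right[of M "{m0}"]) (auto simp: \<kappa>_def inj_on_def)
  finally have "p \<noteq> 0"
    using cnz[OF m0] by auto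
  then have "finite {x. poly p x = 0}"
    by (rule poly_roots_finite)
  moreover have "infinite (range (real :: nat \<Rightarrow> real))"
    by (simp add: range_inj_infinite)
  ultimately obtain x :: nat where x: "poly p (real x) \<noteq> 0"
    by (metis (mono_tags, lifting) finite_subset image_subset_iff mem_Collect_eq)
  have "(\<Prod>i<n. real (x ^ B ^ i) ^ m i) = real x ^ \<kappa> m" for m
    by (simp add: \<kappa>_def power_sum power_mult[symmetric] mult.commute)
  then have "poly_eval n M c (\<lambda>i. real (x ^ B ^ i)) = poly p (real x)"
    by (simp add: poly_eval_def p_def poly_sum poly_monom)
  then show ?thesis
    using x by (intro exI[of _ "\<lambda>i. x ^ B ^ i"]) simp
qed

lemma poly_eval_cong:
  "(\<And>i. i < n \<Longrightarrow> v i = w i) \<Longrightarrow> poly_eval n M c v = poly_eval n M c w"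
  unfolding poly_eval_def by (intro sum.cong refl arg_cong2[where f = "(*)"] prod.cong) auto

lemma nonzero_poly_nc_eval_zero:
  assumes "nonzero_poly_nc n M c"
  shows "poly_eval n M c (\<lambda>_. 0) = 0"
  unfolding poly_eval_def
proof (intro sum.neutral ballI)
  fix m
  assume "m \<in> M"
  then obtain i where "m i \<noteq> 0" "i < n"
    using assms unfolding nonzero_poly_nc_def by (metis not_le)
  then have "(\<Prod>i<n. (0::real) ^ m i) = 0"
    by (intro prod_zero) auto
  then show "c m * (\<Prod>i<n. (0::real) ^ m i) = 0"
    by simp
qed

section \<open>The algebra of coded nets\<close>

definition membership_pattern :: "'a set \<Rightarrow> 'a list \<Rightarrow> bool list" where
  "membership_pattern S xs = map (\<lambda>z. z \<in> S) xs"

definition pattern_value :: "'a set \<Rightarrow> 'a list \<times> (bool list \<times> nat) list \<Rightarrow> nat" where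
  "pattern_value S y =
     (case map_of (snd y) (membership_pattern S (fst y)) of Some k \<Rightarrow> k | None \<Rightarrow> 0)"

lemma pattern_value_Nil [simp]: "pattern_value S ([], []) = 0"
  by (simp add: pattern_value_def)

lemma pattern_value_interpolation:
  fixes S :: "nat \<Rightarrow> 'a set" and k :: "nat \<Rightarrow> nat"
  assumes "inj_on S {..<n}"
  shows "\<exists>y. \<forall>i<n. pattern_value (S i) y = k i"
proof -
  define sep where "sep = (\<lambda>(i, j). SOME z. (z \<in> S i) \<noteq> (z \<in> S j))"
  define xs where "xs = map sep (List.product [0..<n] [0..<n])"
  have sep: "sep (i, j) \<in> set xs \<and> (sep (i, j) \<in> S i) \<noteq> (sep (i, j) \<in> S j)"
    if "i < n" "j < n" "i \<noteq> j" for i j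
  proof -
    have "S i \<noteq> S j"
      using assms that by (auto simp: inj_on_def)
    then have "\<exists>z. (z \<in> S i) \<noteq> (z \<in> S j)"
      by blast
    then have "(sep (i, j) \<in> S i) \<noteq> (sep (i, j) \<in> S j)"
      unfolding sep_def prod.case by (rule someI_ex)
    then show ?thesis
      using that by (auto simp: xs_def)
  qed
  have "membership_pattern (S i) xs \<noteq> membership_pattern (S j) xs"
    if "i < n" "j < n" "i \<noteq> j" for i j
    using sep[OF that] unfolding membership_pattern_def by (metis (mono_tags) map_eq_conv)
  then have patterns_inj: "inj_on (\<lambda>i. membership_pattern (S i) xs) {..<n}"
    by (auto intro: inj_onI)
  define tab where "tab = map (\<lambda>i. (membership_pattern (S i) xs, k i)) [0..<n]"
  have "distinct (map fst tab)"
    using patterns_inj by (simp add: tab_def distinct_map inj_on_def)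
  then have "map_of tab (membership_pattern (S i) xs) = Some (k i)" if "i < n" for i
    using that by (intro map_of_is_SomeI) (auto simp: tab_def)
  then have "\<forall>i<n. pattern_value (S i) (xs, tab) = k i"
    by (simp add: pattern_value_def)
  then show ?thesis
    by blast
qed

lemma (in null_exhaustion) restricted_net_in_AN:
  assumes "G \<notin> borel_measurable lebesgue"
  shows "(\<lambda>A t. if A \<in> D \<and> t \<in> N A then G t else 0) \<in> AN D le"
    (is "?x \<in> _")
proof -
  have "?x A \<in> borel_measurable lebesgue" if "A \<in> D" for A
  proof (rule borel_measurable_AE[OF borel_measurable_const])
    show "AE t in lebesgue. 0 = ?x A t"
      using null_index[OF that] by (rule AE_I') auto
  qed
  moreover have "net_tendsto D le (\<lambda>A. ?x A t) (G t)" for t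
    unfolding net_tendsto_def
  proof (intro allI impI)
    fix U
    assume "open U \<and> G t \<in> U"
    moreover obtain a where "a \<in> D" "t \<in> N a"
      using exhausting by blast
    ultimately show "\<exists>A0\<in>D. \<forall>A\<in>D. le A0 A \<longrightarrow> ?x A t \<in> U"
      using mono_index by (intro bexI[of _ a]) auto
  qed
  then have "AE t in lebesgue. net_tendsto D le (\<lambda>A. ?x A t) (G t)"
    by simp
  moreover have "?x \<in> nets D"
    by (simp add: nets_def)
  ultimately show ?thesis
    using assms unfolding AN_def by blast
qed

definition coded_net ::
    "'i set \<Rightarrow> ('i \<Rightarrow> real set) \<Rightarrow> (real \<Rightarrow> 'a list \<times> (bool list \<times> nat) list) \<Rightarrow> 'a set
      \<Rightarrow> 'i \<Rightarrow> real \<Rightarrow> real" where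
  "coded_net D N \<eta> S = (\<lambda>A t. if A \<in> D \<and> t \<in> N A then real (pattern_value S (\<eta> t)) else 0)"

lemma net_poly_eval_coded_nets:
  assumes "nonzero_poly_nc n M c" "\<forall>i<n. x i = coded_net D N \<eta> (S i)"
  shows "net_poly_eval n M c x =
    (\<lambda>A t. if A \<in> D \<and> t \<in> N A then poly_eval n M c (\<lambda>i. real (pattern_value (S i) (\<eta> t))) else 0)"
proof (intro ext)
  fix A t
  have "net_poly_eval n M c x A t = poly_eval n M c
      (if A \<in> D \<and> t \<in> N A then (\<lambda>i. real (pattern_value (S i) (\<eta> t))) else (\<lambda>_. 0))"
    unfolding net_poly_eval_def using assms(2) by (intro poly_eval_cong) (simp add: coded_net_def)
  then show "net_poly_eval n M c x A t =
      (if A \<in> D \<and> t \<in> N A then poly_eval n M c (\<lambda>i. real (pattern_value (S i) (\<eta> t))) else 0)"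
    using nonzero_poly_nc_eval_zero[OF assms(1)] by simp
qed

lemma poly_of_patterns_nonmeasurable:
  assumes "bernstein_map \<eta>" "nonzero_poly_nc n M c" "inj_on S {..<n}"
  shows "(\<lambda>t. poly_eval n M c (\<lambda>i. real (pattern_value (S i) (\<eta> t)))) \<notin> borel_measurable lebesgue"
proof -
  obtain k where k: "poly_eval n M c (\<lambda>i. real (k i)) \<noteq> 0"
    using nonzero_poly_nc_nonvanishing[OF assms(2)] by blast
  obtain y0 where "\<forall>i<n. pattern_value (S i) y0 = k i"
    using pattern_value_interpolation[OF assms(3)] by blast
  then have "poly_eval n M c (\<lambda>i. real (pattern_value (S i) y0)) = poly_eval n M c (\<lambda>i. real (k i))"
    by (intro poly_eval_cong) simp
  then have "poly_eval n M c (\<lambda>i. real (pattern_value (S i) y0)) \<noteq> 0"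
    using k by simp
  moreover have "poly_eval n M c (\<lambda>i. real (pattern_value (S i) ([], []))) = 0"
    using nonzero_poly_nc_eval_zero[OF assms(2)] by simp
  ultimately show ?thesis
    by (intro bernstein_map_nonmeasurable[OF assms(1), of y0 _ "([], [])"]) auto
qed

lemma (in null_exhaustion) coded_net_inj:
  assumes "bernstein_map \<eta>"
  shows "inj (coded_net D N \<eta>)"
proof (rule injI, rule ccontr)
  fix S S'
  assume eq: "coded_net D N \<eta> S = coded_net D N \<eta> S'" and "S \<noteq> S'"
  then have "inj_on (\<lambda>i :: nat. if i = 0 then S else S') {..<2}"
    by (auto simp: inj_on_def)
  then obtain y where y: "\<forall>i<(2::nat). pattern_value (if i = 0 then S else S') y = (if i = 0 then 1 else 0)"
    using pattern_value_interpolation[where k = "\<lambda>i. if i = 0 then 1 else 0"] by blast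
  obtain t where "\<eta> t = y"
    using surjD[OF bernstein_map_surj[OF assms]] by metis
  moreover obtain a where "a \<in> D" "t \<in> N a"
    using exhausting by blast
  ultimately have "coded_net D N \<eta> S a t = 1" "coded_net D N \<eta> S' a t = 0"
    using y[rule_format, of 0] y[rule_format, of 1] by (auto simp: coded_net_def)
  then show False
    using eq by simp
qed

lemma (in null_exhaustion) net_poly_eval_coded_nets_in_AN:
  assumes "bernstein_map \<eta>" "nonzero_poly_nc n M c" "inj_on S {..<n}"
    and "\<forall>i<n. x i = coded_net D N \<eta> (S i)"
  shows "net_poly_eval n M c x \<noteq> (\<lambda>_ _. 0)" "net_poly_eval n M c x \<in> AN D le"
proof -
  define G where "G t = poly_eval n M c (\<lambda>i. real (pattern_value (S i) (\<eta> t)))" for t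
  have "G \<notin> borel_measurable lebesgue"
    unfolding G_def using assms(1-3) by (rule poly_of_patterns_nonmeasurable)
  have poly_x: "net_poly_eval n M c x = (\<lambda>A t. if A \<in> D \<and> t \<in> N A then G t else 0)"
    unfolding G_def using assms(2,4) by (rule net_poly_eval_coded_nets)
  show "net_poly_eval n M c x \<in> AN D le"
    unfolding poly_x using \<open>G \<notin> _\<close> by (rule restricted_net_in_AN)
  have "G \<noteq> (\<lambda>_. 0)"
    using \<open>G \<notin> _\<close> by auto
  then obtain t where "G t \<noteq> 0"
    by blast
  moreover obtain a where "a \<in> D" "t \<in> N a"
    using exhausting by blast
  ultimately have "net_poly_eval n M c x a t \<noteq> 0"
    using poly_x by simp
  then show "net_poly_eval n M c x \<noteq> (\<lambda>_ _. 0)"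
    by auto
qed

lemma (in null_exhaustion) strongly_algebrable_AN:
  fixes \<eta> :: "real \<Rightarrow> real list \<times> (bool list \<times> nat) list"
  assumes "bernstein_map \<eta>"
  shows "strongly_algebrable_nets D (AN D le) (Pow (UNIV :: real set))"
  unfolding strongly_algebrable_nets_def
proof (intro exI conjI allI impI)
  let ?X = "range (coded_net D N \<eta>)"
  show "?X \<subseteq> nets D"
    by (auto simp: nets_def coded_net_def)
  have "bij_betw (coded_net D N \<eta>) UNIV ?X"
    using coded_net_inj[OF assms] by (simp add: bij_betw_def)
  then have "|UNIV :: real set set| =o |?X|"
    using card_of_ordIso by blast
  from ordIso_symmetric[OF this] show "|?X| =o |Pow (UNIV :: real set)|"
    by simp
  fix n M c and x :: "nat \<Rightarrow> 'i \<Rightarrow> real \<Rightarrow> real"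
  assume P: "nonzero_poly_nc n M c \<and> inj_on x {..<n} \<and> x ` {..<n} \<subseteq> ?X"
  define S where "S = inv (coded_net D N \<eta>) \<circ> x"
  have x_S: "\<forall>i<n. x i = coded_net D N \<eta> (S i)"
    using P by (auto simp: S_def f_inv_into_f)
  then have "inj_on S {..<n}"
    using P by (metis inj_on_def lessThan_iff)
  then show "net_poly_eval n M c x \<noteq> (\<lambda>_ _. 0)" "net_poly_eval n M c x \<in> AN D le"
    using net_poly_eval_coded_nets_in_AN[OF assms _ _ x_S] P by blast+
qed

theorem mainTheorem6:
  shows "\<exists>(D :: real set) (le :: real \<Rightarrow> real \<Rightarrow> bool).
           directed_set D le \<and> \<not> is_cardinal_number D le \<and> card_eq_covN D
           \<and> strongly_algebrable_nets D (AN D le) (Pow (UNIV :: real set))"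
proof -
  obtain D :: "real set" and le N where
    "directed_set D le" "\<not> is_cardinal_number D le" "card_eq_covN D" "null_exhaustion D le N"
    using exists_directed_null_exhaustion by blast
  moreover obtain \<eta> :: "real \<Rightarrow> real list \<times> (bool list \<times> nat) list" where "bernstein_map \<eta>"
    using bernstein_map_exists[OF card_of_real_lists_times_countable_le] by blast
  ultimately show ?thesis
    using null_exhaustion.strongly_algebrable_AN[of D le N \<eta>] by blast
qed

end
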